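(* Let $d\ge2$, let $A$ be a symmetric positive definite real $d\times d$ matrix, $G=(g_{ij})$ a real $d\times d$ matrix and $S=(s_{ij})$ a real symmetric $d\times d$ matrix. Let $\Phi(x)=\frac12\langle x,Sx\rangle$ and $\mu=e^{2\Phi}dx=e^{\langle x,Sx\rangle}dx$. Then $\mu$ is an infinitesimally invariant measure for $(L^{A,G},C_0^\infty(\mathbb R^d))$, where $L^{A,G}f=\frac12\mathrm{trace}(A\nabla^2f)+\langle Gx,\nabla f\rangle$, if and only if $$SG+G^TS=2SAS\quad\text{and}\quad\mathrm{trace}(G-AS)=0.$$ Moreover, with $H=(h_{ij}):=G-AS$, these two conditions are equivalent to the system $$\sum_{i=1}^d s_{ij}h_{ij}=0\ (1\le j\le d),\qquad \sum_{i=1}^d(s_{ij}h_{ik}+s_{ik}h_{ij})=0\ (1\le j<k\le d),\qquad\sum_{i=1}^dh_{ii}=0.$$ In particular, for $\widetilde Gx:=Sx+(G-AS)x$, the decomposition of $\widetilde Gx$ with potential $\Phi$ (so $\nabla\Phi(x)=Sx$) and remainder $(G-AS)x$ is a WHHD if and only if it is an SOHHD, if and only if $\mu$ is an infinitesimally invariant measure for $(L^{A,G},C_0^\infty(\mathbb R^d))$.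
   Context: A positive locally finite Borel measure $\hat\mu$ is an infinitesimally invariant measure for $(L,C_0^\infty(\mathbb R^d))$ if $Lf\in L^1(\hat\mu)$ and $\int Lf\,d\hat\mu=0$ for all $f\in C_0^\infty$. For a vector field $\widetilde{\mathbf G}$, a decomposition $\widetilde{\mathbf G}=\nabla\Phi+\mathbf B$ is a WHHD if $\int\langle\mathbf B,\nabla f\rangle e^{2\Phi}dx=0$ for all $f\in C_0^\infty$; it is an OHHD if $\int\langle\mathbf B,\nabla f\rangle dx=0$ for all $f\in C_0^\infty$ and $\langle\nabla\Phi,\mathbf B\rangle=0$ a.e.; it is a strictly orthogonal HHD (SOHHD) if it is an OHHD, $\widetilde{\mathbf G}$ is continuous and $\Phi,\mathbf B$ are continuously differentiable (so that $\mathrm{div}\mathbf B=0$ and $\langle\nabla\Phi,\mathbf B\rangle=0$ everywhere). *)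

theory Defs
  imports "HOL-Analysis.Analysis"
begin

definition pd :: "'n::finite \<Rightarrow> (real^'n \<Rightarrow> real) \<Rightarrow> real^'n \<Rightarrow> real" where
  "pd i f x = frechet_derivative f (at x) (axis i 1)"

fun iter_pd :: "'n::finite list \<Rightarrow> (real^'n \<Rightarrow> real) \<Rightarrow> real^'n \<Rightarrow> real" where
  "iter_pd [] f = f"
| "iter_pd (i # is) f = pd i (iter_pd is f)"

definition smooth :: "(real^'n::finite \<Rightarrow> real) \<Rightarrow> bool" where
  "smooth f \<longleftrightarrow> (\<forall>is x. iter_pd is f differentiable (at x))"

definition test_fun :: "(real^'n::finite \<Rightarrow> real) \<Rightarrow> bool" where
  "test_fun f \<longleftrightarrow> smooth f \<and> compact (closure {x. f x \<noteq> 0})"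

definition C1 :: "(real^'n::finite \<Rightarrow> real) \<Rightarrow> bool" where
  "C1 f \<longleftrightarrow> (\<forall>x. f differentiable (at x)) \<and> (\<forall>i. continuous_on UNIV (pd i f))"

definition C1_field :: "(real^'n::finite \<Rightarrow> real^'n) \<Rightarrow> bool" where
  "C1_field B \<longleftrightarrow> (\<forall>j. C1 (\<lambda>x. B x $ j))"

definition grad :: "(real^'n::finite \<Rightarrow> real) \<Rightarrow> real^'n \<Rightarrow> real^'n" where
  "grad f x = (\<chi> i. pd i f x)"

definition hess :: "(real^'n::finite \<Rightarrow> real) \<Rightarrow> real^'n \<Rightarrow> real^'n^'n" where
  "hess f x = (\<chi> i j. pd i (pd j f) x)"

definition LAG :: "real^'n^'n \<Rightarrow> real^'n^'n \<Rightarrow> (real^'n::finite \<Rightarrow> real) \<Rightarrow> real^'n \<Rightarrow> real" where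
  "LAG A G f x = 1/2 * trace (A ** hess f x) + (G *v x) \<bullet> grad f x"

definition inf_invariant :: "(real^'n::finite) measure \<Rightarrow> ((real^'n \<Rightarrow> real) \<Rightarrow> real^'n \<Rightarrow> real) \<Rightarrow> bool" where
  "inf_invariant M L \<longleftrightarrow>
     (\<forall>f. test_fun f \<longrightarrow> integrable M (L f) \<and> (\<integral>x. L f x \<partial>M) = 0)"

definition WHHD :: "(real^'n::finite \<Rightarrow> real^'n) \<Rightarrow> (real^'n \<Rightarrow> real) \<Rightarrow> (real^'n \<Rightarrow> real^'n) \<Rightarrow> bool" where
  "WHHD Gt Phi B \<longleftrightarrow> (\<forall>x. Phi differentiable (at x)) \<and> (\<forall>x. Gt x = grad Phi x + B x) \<and>
     (\<forall>f. test_fun f \<longrightarrow> (\<integral>x. (B x \<bullet> grad f x) * exp (2 * Phi x) \<partial>lborel) = 0)"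

definition OHHD :: "(real^'n::finite \<Rightarrow> real^'n) \<Rightarrow> (real^'n \<Rightarrow> real) \<Rightarrow> (real^'n \<Rightarrow> real^'n) \<Rightarrow> bool" where
  "OHHD Gt Phi B \<longleftrightarrow> (\<forall>x. Phi differentiable (at x)) \<and> (\<forall>x. Gt x = grad Phi x + B x) \<and>
     (\<forall>f. test_fun f \<longrightarrow> (\<integral>x. B x \<bullet> grad f x \<partial>lborel) = 0) \<and>
     (AE x in lborel. grad Phi x \<bullet> B x = 0)"

definition SOHHD :: "(real^'n::finite \<Rightarrow> real^'n) \<Rightarrow> (real^'n \<Rightarrow> real) \<Rightarrow> (real^'n \<Rightarrow> real^'n) \<Rightarrow> bool" where
  "SOHHD Gt Phi B \<longleftrightarrow> OHHD Gt Phi B \<and> continuous_on UNIV Gt \<and> C1 Phi \<and> C1_field B"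

end

theory Submission
  imports Defs "HOL-Computational_Algebra.Polynomial"
begin

(* Write rho(x) = exp <x, S x> = exp (2 Phi(x)) and H = G - A S, and note grad rho = 2 rho S x.
   Moving one derivative of the second-order part of L onto rho gives, for every test function f,
     int rho (L f) = int <rho H x, grad f>
   (the term <A S x, grad f> produced by grad rho is exactly what turns G into H), and a second
   integration by parts gives
     int <rho H x, grad f> = - int f div (rho H x),   div (rho H x) = rho (tr H + 2 <S x, H x>).
   By the fundamental lemma of the calculus of variations both infinitesimal invariance and the
   WHHD property are therefore equivalent to tr H + 2 <S x, H x> = 0 for all x, i.e. to tr H = 0
   together with S H + (S H)^T = 0, which unfolds to S G + G^T S = 2 S A S and to the entrywise
   system. Without the weight, div (H x) = tr H, so the OHHD conditions (a vanishing integral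
   against every gradient, and <S x, H x> = 0) reduce to the same two equations. *)

section \<open>Partial derivatives and elementary smooth functions\<close>

fun psi_poly :: "nat \<Rightarrow> real poly" where
  "psi_poly 0 = 1"
| "psi_poly (Suc k) = [:0, 0, 1:] * (psi_poly k - pderiv (psi_poly k))"

text \<open>\<open>psi k\<close> is the \<open>k\<close>-th derivative of the smooth but non-analytic function
  \<open>exp (-1/t)\<close> for \<open>t > 0\<close>, \<open>0\<close> for \<open>t \<le> 0\<close>.\<close>

definition psi :: "nat \<Rightarrow> real \<Rightarrow> real" where
  "psi k t = (if t > 0 then poly (psi_poly k) (inverse t) * exp (- inverse t) else 0)"

lemma tendsto_poly_inverse_mult_exp:
  "((\<lambda>t. poly p (inverse t) * exp (- inverse t)) \<longlongrightarrow> (0::real)) (at_right 0)"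
proof -
  have "((\<lambda>u. \<Sum>i\<le>degree p. coeff p i * (u ^ i / exp u)) \<longlongrightarrow> (\<Sum>i\<le>degree p. coeff p i * 0)) at_top"
    by (intro tendsto_intros tendsto_power_div_exp_0)
  then have "((\<lambda>u. poly p u / exp u) \<longlongrightarrow> 0) at_top"
    by (simp add: poly_altdef sum_divide_distrib)
  from filterlim_compose[OF this filterlim_inverse_at_top_right]
  show ?thesis by (simp add: exp_minus field_simps)
qed

lemma psi_has_real_derivative: "(psi k has_real_derivative psi (Suc k) t) (at t)"
proof (cases t "0::real" rule: linorder_cases)
  case less
  have "((\<lambda>t. 0) has_real_derivative psi (Suc k) t) (at t)"
    using less by (simp add: psi_def)
  then show ?thesis
    by (rule has_field_derivative_transform_within_open[where S="{..<0}"]) (use less in \<open>auto simp: psi_def\<close>)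
next
  case equal
  have "((\<lambda>t. poly ([:0, 1:] * psi_poly k) (inverse t) * exp (- inverse t)) \<longlongrightarrow> 0) (at_right 0)"
    by (rule tendsto_poly_inverse_mult_exp)
  then have "((\<lambda>t. (psi k t - psi k 0) / (t - 0)) \<longlongrightarrow> 0) (at_right 0)"
    by (rule Lim_transform_eventually)
       (auto simp: eventually_at_right_field psi_def field_simps intro: exI[of _ 1])
  moreover have "((\<lambda>t. (psi k t - psi k 0) / (t - 0)) \<longlongrightarrow> 0) (at_left 0)"
    by (rule Lim_transform_eventually[OF tendsto_const])
       (auto simp: eventually_at_left_field psi_def intro: exI[of _ "-1"])
  ultimately show ?thesis
    using equal by (simp add: has_field_derivative_iff filterlim_split_at_real psi_def)
next
  case greater
  have "((\<lambda>t. poly (psi_poly k) (inverse t) * exp (- inverse t)) has_real_derivative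
      poly (pderiv (psi_poly k)) (inverse t) * (- inverse (t^2)) * exp (- inverse t)
      + poly (psi_poly k) (inverse t) * (exp (- inverse t) * inverse (t^2))) (at t)"
    using greater by (auto intro!: derivative_eq_intros simp: power2_eq_square field_simps)
  then have "((\<lambda>t. poly (psi_poly k) (inverse t) * exp (- inverse t)) has_real_derivative psi (Suc k) t) (at t)"
    using greater by (simp add: psi_def algebra_simps power2_eq_square)
  then show ?thesis
    by (rule has_field_derivative_transform_within_open[where S="{0<..}"]) (use greater in \<open>auto simp: psi_def\<close>)
qed

lemma has_derivative_imp_pd: "(f has_derivative D) (at x) \<Longrightarrow> pd i f x = D (axis i 1)"
  by (simp add: pd_def frechet_derivative_at[symmetric])

lemma pd_const [simp]: "pd i (\<lambda>x. c) x = 0"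
  by (simp add: pd_def)

lemma pd_coord [simp]: "pd i (\<lambda>x::real^'n::finite. x $ j) x = (if j = i then 1 else 0)"
  by (simp add: has_derivative_imp_pd[OF bounded_linear_imp_has_derivative[OF bounded_linear_vec_nth]] axis_def)

lemmas differentiable_has_frechet_derivative = frechet_derivative_works[THEN iffD1]

lemma pd_add:
  assumes "f differentiable (at x)" and "g differentiable (at x)"
  shows "pd i (\<lambda>x. f x + g x) x = pd i f x + pd i g x"
  using has_derivative_imp_pd[OF has_derivative_add[OF assms[THEN differentiable_has_frechet_derivative]]]
  by (simp add: pd_def)

lemma pd_mult:
  fixes f g :: "real^'n::finite \<Rightarrow> real"
  assumes "f differentiable (at x)" and "g differentiable (at x)"
  shows "pd i (\<lambda>x. f x * g x) x = f x * pd i g x + pd i f x * g x"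
  using has_derivative_imp_pd[OF has_derivative_mult[OF assms[THEN differentiable_has_frechet_derivative]]]
  by (simp add: pd_def)

lemma pd_sum:
  fixes g :: "'a \<Rightarrow> real^'n::finite \<Rightarrow> real"
  assumes "\<And>j. j \<in> J \<Longrightarrow> g j differentiable (at x)"
  shows "pd i (\<lambda>x. \<Sum>j\<in>J. g j x) x = (\<Sum>j\<in>J. pd i (g j) x)"
  using has_derivative_imp_pd[OF has_derivative_sum[of J g "\<lambda>j. frechet_derivative (g j) (at x)"]]
    assms[THEN differentiable_has_frechet_derivative]
  by (simp add: pd_def)

lemma pd_comp:
  fixes f :: "real^'n::finite \<Rightarrow> real"
  assumes "f differentiable (at x)" and "(h has_real_derivative h') (at (f x))"
  shows "pd i (\<lambda>x. h (f x)) x = h' * pd i f x"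
  using has_derivative_imp_pd[OF has_derivative_compose[OF differentiable_has_frechet_derivative[OF assms(1)]
      has_field_derivative_imp_has_derivative[OF assms(2)]]]
  by (simp add: pd_def)

lemma pd_matrix_vector_mult [simp]: "pd k (\<lambda>x. (M *v x) $ i) x = M $ i $ k"
proof -
  have "((\<lambda>x. (M *v x) $ i) has_derivative (\<lambda>h. (M *v h) $ i)) (at x)"
    by (intro bounded_linear_imp_has_derivative bounded_linear_compose[OF bounded_linear_vec_nth]
        matrix_vector_mul_bounded_linear)
  then show ?thesis
    by (simp add: has_derivative_imp_pd matrix_vector_mult_def axis_def if_distrib cong: if_cong)
qed

inductive elementary_smooth :: "(real^'n::finite \<Rightarrow> real) \<Rightarrow> bool" where
  const: "elementary_smooth (\<lambda>x. c)"
| coord: "elementary_smooth (\<lambda>x. x $ j)"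
| add: "elementary_smooth f \<Longrightarrow> elementary_smooth g \<Longrightarrow> elementary_smooth (\<lambda>x. f x + g x)"
| mult: "elementary_smooth f \<Longrightarrow> elementary_smooth g \<Longrightarrow> elementary_smooth (\<lambda>x. f x * g x)"
| comp:
    "(\<And>k t. (\<phi> k has_real_derivative \<phi> (Suc k) t) (at t)) \<Longrightarrow> elementary_smooth f \<Longrightarrow>
    elementary_smooth (\<lambda>x. \<phi> m (f x))"

lemma elementary_smooth_differentiable_pd:
  "elementary_smooth f \<Longrightarrow> (\<forall>x. f differentiable (at x)) \<and> (\<forall>i. elementary_smooth (pd i f))"
proof (induction rule: elementary_smooth.induct)
  case (coord j)
  have "pd i (\<lambda>x::real^'a. x $ j) = (\<lambda>x. if j = i then 1 else 0)" for i
    by auto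
  then show ?case
    using bounded_linear_imp_differentiable[OF bounded_linear_vec_nth]
    by (auto intro: elementary_smooth.const)
next
  case (add f g)
  then have "pd i (\<lambda>x. f x + g x) = (\<lambda>x. pd i f x + pd i g x)" for i
    by (simp add: pd_add fun_eq_iff)
  with add show ?case by (auto intro: elementary_smooth.add)
next
  case (mult f g)
  then have "pd i (\<lambda>x. f x * g x) = (\<lambda>x. f x * pd i g x + pd i f x * g x)" for i
    by (simp add: pd_mult fun_eq_iff)
  with mult show ?case by (auto intro!: elementary_smooth.add elementary_smooth.mult)
next
  case (comp \<phi> f m)
  then have "pd i (\<lambda>x. \<phi> m (f x)) = (\<lambda>x. \<phi> (Suc m) (f x) * pd i f x)" for i
    by (simp add: pd_comp fun_eq_iff)
  moreover have "(\<lambda>x. \<phi> m (f x)) differentiable (at x)" for x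
    using comp differentiable_compose field_differentiable_imp_differentiable
      field_differentiable_def by blast
  ultimately show ?case
    using comp by (auto intro!: elementary_smooth.mult elementary_smooth.comp[of \<phi>])
qed (simp add: elementary_smooth.const)

lemma iter_pd_append: "iter_pd (is @ js) f = iter_pd is (iter_pd js f)"
  by (induction "is") auto

lemma elementary_smooth_imp_smooth: "elementary_smooth f \<Longrightarrow> smooth f"
proof -
  assume "elementary_smooth f"
  then have "elementary_smooth (iter_pd is f)" for "is"
    by (induction "is") (auto dest: elementary_smooth_differentiable_pd)
  then show ?thesis
    by (simp add: smooth_def elementary_smooth_differentiable_pd)
qed

lemma smooth_pd: "smooth f \<Longrightarrow> smooth (pd i f)"
  unfolding smooth_def by (metis iter_pd_append iter_pd.simps)

lemma smooth_imp_C1: "smooth f \<Longrightarrow> C1 f"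
  unfolding C1_def smooth_def
  by (metis continuous_at_imp_continuous_on differentiable_imp_continuous_within iter_pd.simps)

lemma elementary_smooth_differentiable: "elementary_smooth f \<Longrightarrow> f differentiable (at x)"
  using elementary_smooth_differentiable_pd by blast

lemma elementary_smooth_imp_C1: "elementary_smooth f \<Longrightarrow> C1 f"
  by (simp add: elementary_smooth_imp_smooth smooth_imp_C1)

lemma elementary_smooth_sum:
  "(\<And>j. elementary_smooth (g j)) \<Longrightarrow> elementary_smooth (\<lambda>x. \<Sum>j\<in>J. g j x)"
  by (induction J rule: infinite_finite_induct) (simp_all add: elementary_smooth.const elementary_smooth.add)

lemma elementary_smooth_diff:
  assumes "elementary_smooth f" and "elementary_smooth g"
  shows "elementary_smooth (\<lambda>x. f x - g x)"
proof -
  have "elementary_smooth (\<lambda>x. f x + (- 1) * g x)"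
    by (intro elementary_smooth.add elementary_smooth.mult elementary_smooth.const assms)
  then show ?thesis by simp
qed

lemma elementary_smooth_matrix_vector_mult: "elementary_smooth (\<lambda>x. (M *v x) $ i)"
  unfolding matrix_vector_mult_def
  by (simp add: elementary_smooth_sum elementary_smooth.mult elementary_smooth.const elementary_smooth.coord)

lemma elementary_smooth_inner:
  "(\<And>i. elementary_smooth (\<lambda>x. u x $ i)) \<Longrightarrow> (\<And>i. elementary_smooth (\<lambda>x. v x $ i)) \<Longrightarrow>
   elementary_smooth (\<lambda>x. u x \<bullet> v x)"
  unfolding inner_vec_def by (simp add: elementary_smooth_sum elementary_smooth.mult)

lemma elementary_smooth_exp: "elementary_smooth f \<Longrightarrow> elementary_smooth (\<lambda>x. exp (f x))"
  using elementary_smooth.comp[of "\<lambda>_. exp"] by simp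

lemma elementary_smooth_quadratic_form: "elementary_smooth (\<lambda>x. c * (x \<bullet> (S *v x)))"
  by (intro elementary_smooth.mult elementary_smooth.const elementary_smooth_inner[of "\<lambda>x. x"]
      elementary_smooth.coord elementary_smooth_matrix_vector_mult)

lemma C1_continuous: "C1 f \<Longrightarrow> continuous_on UNIV f"
  by (meson C1_def continuous_at_imp_continuous_on differentiable_imp_continuous_within)

lemma C1_const: "C1 (\<lambda>x. c)"
  by (simp add: C1_def)

lemma C1_mult:
  fixes f g :: "real^'n::finite \<Rightarrow> real"
  assumes f: "C1 f" and g: "C1 g"
  shows "C1 (\<lambda>x. f x * g x)"
proof -
  have "pd i (\<lambda>x. f x * g x) = (\<lambda>x. f x * pd i g x + pd i f x * g x)" for i
    using f g by (simp add: C1_def pd_mult fun_eq_iff)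
  then show ?thesis
    using f g C1_continuous[OF f] C1_continuous[OF g]
    by (auto simp: C1_def intro!: continuous_intros)
qed

lemma C1_sum:
  fixes g :: "'a \<Rightarrow> real^'n::finite \<Rightarrow> real"
  assumes "finite J" and "\<And>j. C1 (g j)"
  shows "C1 (\<lambda>x. \<Sum>j\<in>J. g j x)"
proof -
  have "pd i (\<lambda>x. \<Sum>j\<in>J. g j x) = (\<lambda>x. \<Sum>j\<in>J. pd i (g j) x)" for i
    using assms by (simp add: C1_def pd_sum fun_eq_iff)
  then show ?thesis
    using assms by (auto simp: C1_def intro!: continuous_intros)
qed

lemma C1_field_scaleR:
  assumes "C1 w" and "C1_field V"
  shows "C1_field (\<lambda>x. w x *\<^sub>R V x)"
  using assms by (simp add: C1_field_def C1_mult)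

lemma C1_field_matrix_vector_mult:
  assumes "C1_field V"
  shows "C1_field (\<lambda>x. M *v V x)"
  using assms unfolding C1_field_def matrix_vector_mult_def
  by (auto intro!: C1_sum C1_mult C1_const)

lemma C1_field_grad: "(\<And>i. C1 (pd i f)) \<Longrightarrow> C1_field (grad f)"
  by (simp add: C1_field_def grad_def)

lemma C1_field_linear: "C1_field (\<lambda>x. M *v x)"
  by (simp add: C1_field_def elementary_smooth_imp_C1 elementary_smooth_matrix_vector_mult)

lemma continuous_on_grad: "(\<And>i. continuous_on UNIV (pd i f)) \<Longrightarrow> continuous_on UNIV (grad f)"
  unfolding grad_def by (rule continuous_on_vec_lambda)

definition divergence :: "(real^'n::finite \<Rightarrow> real^'n) \<Rightarrow> real^'n \<Rightarrow> real" where
  "divergence V x = (\<Sum>i\<in>UNIV. pd i (\<lambda>y. V y $ i) x)"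

lemma continuous_on_divergence: "C1_field V \<Longrightarrow> continuous_on UNIV (divergence V)"
  unfolding divergence_def[abs_def] C1_field_def C1_def by (intro continuous_intros) auto

lemma divergence_scaleR:
  assumes "w differentiable (at x)" and "\<And>i. (\<lambda>y. V y $ i) differentiable (at x)"
  shows "divergence (\<lambda>y. w y *\<^sub>R V y) x = w x * divergence V x + grad w x \<bullet> V x"
proof -
  have "pd i (\<lambda>y. (w y *\<^sub>R V y) $ i) x = w x * pd i (\<lambda>y. V y $ i) x + pd i w x * V x $ i" for i
    using pd_mult[OF assms(1) assms(2)] by simp
  then show ?thesis
    by (simp add: divergence_def grad_def inner_vec_def sum.distrib sum_distrib_left mult.commute)
qed

lemma divergence_matrix_vector_mult: "divergence (\<lambda>x. M *v x) x = trace M"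
  by (simp add: divergence_def trace_def)

lemma divergence_transpose_mult_grad:
  assumes "\<And>i. pd i f differentiable (at x)"
  shows "divergence (\<lambda>y. transpose M *v grad f y) x = trace (M ** hess f x)"
proof -
  have "pd k (\<lambda>y. \<Sum>i\<in>UNIV. M $ i $ k * pd i f y) x = (\<Sum>i\<in>UNIV. M $ i $ k * pd k (pd i f) x)" for k
    using assms by (simp add: pd_sum pd_mult)
  moreover have "(transpose M *v grad f y) $ k = (\<Sum>i\<in>UNIV. M $ i $ k * pd i f y)" for y k
    by (simp add: matrix_vector_mult_def transpose_def grad_def)
  ultimately have "divergence (\<lambda>y. transpose M *v grad f y) x
      = (\<Sum>k\<in>UNIV. \<Sum>i\<in>UNIV. M $ i $ k * pd k (pd i f) x)"
    by (simp add: divergence_def)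
  also have "\<dots> = trace (M ** hess f x)"
    by (subst sum.swap) (simp add: trace_def matrix_matrix_mult_def hess_def)
  finally show ?thesis .
qed

section \<open>Integrals of derivatives of functions with bounded support\<close>

definition vanishes_outside :: "real \<Rightarrow> ('a::real_normed_vector \<Rightarrow> 'b::zero) \<Rightarrow> bool" where
  "vanishes_outside R h \<longleftrightarrow> (\<forall>x. R < norm x \<longrightarrow> h x = 0)"

lemma integrable_continuous_vanishes_outside:
  fixes h :: "'a::euclidean_space \<Rightarrow> real"
  assumes "continuous_on UNIV h" and "vanishes_outside R h"
  shows "integrable lborel h"
proof -
  have "integrable lborel (\<lambda>x. indicator (cball 0 R) x *\<^sub>R h x)"
    by (rule borel_integrable_compact) (auto intro: continuous_on_subset[OF assms(1)])
  moreover have "(\<lambda>x. indicator (cball 0 R) x *\<^sub>R h x) = h"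
    using assms(2) by (auto simp: fun_eq_iff indicator_def vanishes_outside_def)
  ultimately show ?thesis by simp
qed

lemma continuous_vanishes_outside_bounded:
  fixes h :: "'a::euclidean_space \<Rightarrow> real"
  assumes "continuous_on UNIV h" and "vanishes_outside R h"
  obtains M where "\<forall>x. \<bar>h x\<bar> \<le> M"
proof -
  have "bounded (h ` cball 0 R)"
    by (intro compact_imp_bounded compact_continuous_image continuous_on_subset[OF assms(1)]) auto
  then obtain M where "\<forall>x\<in>cball 0 R. \<bar>h x\<bar> \<le> M"
    by (auto simp: bounded_iff)
  then have "\<bar>h x\<bar> \<le> max M 0" for x
    using assms(2) unfolding vanishes_outside_def by (metis max.coboundedI1 mem_cball_0 not_le abs_zero max.cobounded2)
  then show ?thesis using that by blast
qed

lemma pd_vanishes_outside: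
  fixes f :: "real^'n::finite \<Rightarrow> real"
  assumes "vanishes_outside R f"
  shows "vanishes_outside R (pd i f)"
  unfolding vanishes_outside_def
proof (intro allI impI)
  fix x :: "real^'n" assume "R < norm x"
  have "(f has_derivative (\<lambda>h. 0)) (at x)"
  proof (rule has_derivative_transform_within_open[OF has_derivative_const])
    show "open {y::real^'n. R < norm y}" by (intro open_Collect_less continuous_intros)
  qed (use assms \<open>R < norm x\<close> in \<open>auto simp: vanishes_outside_def\<close>)
  then show "pd i f x = 0" by (simp add: has_derivative_imp_pd)
qed

lemma grad_vanishes_outside:
  assumes "vanishes_outside R f" shows "vanishes_outside R (grad f)"
  using pd_vanishes_outside[OF assms] by (simp add: vanishes_outside_def grad_def vec_eq_iff)

lemma
  fixes g :: "'a::euclidean_space \<Rightarrow> real"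
  assumes "g \<in> borel_measurable borel"
  shows integrable_translate: "integrable lborel (\<lambda>x. g (c + x)) \<longleftrightarrow> integrable lborel g"
    and integral_translate: "integral\<^sup>L lborel (\<lambda>x. g (c + x)) = integral\<^sup>L lborel g"
  using integrable_distr_eq[of "(+) c" lborel borel g] integral_distr[of "(+) c" lborel borel g] assms
  by (simp_all add: lborel_distr_plus)

lemma integral_difference_eq_0:
  fixes g :: "'a::euclidean_space \<Rightarrow> real"
  assumes "continuous_on UNIV g" and "vanishes_outside R g"
  shows "integral\<^sup>L lborel (\<lambda>x. (g (x + h) - g x) / c) = 0"
proof -
  have g_meas: "g \<in> borel_measurable borel"
    using assms(1) by (rule borel_measurable_continuous_onI)
  have "integrable lborel g"
    using assms by (rule integrable_continuous_vanishes_outside)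
  then have "integral\<^sup>L lborel (\<lambda>x. (g (x + h) - g x) / c)
      = (integral\<^sup>L lborel (\<lambda>x. g (h + x)) - integral\<^sup>L lborel g) / c"
    using integrable_translate[OF g_meas, of h] by (simp add: integral_diff add.commute)
  then show ?thesis
    by (simp add: integral_translate[OF g_meas])
qed

lemma has_real_derivative_along_axis:
  fixes g :: "real^'n::finite \<Rightarrow> real"
  assumes "g differentiable (at (x + s *\<^sub>R axis k 1))"
  shows "((\<lambda>s. g (x + s *\<^sub>R axis k 1)) has_real_derivative pd k g (x + s *\<^sub>R axis k 1)) (at s)"
proof -
  let ?D = "frechet_derivative g (at (x + s *\<^sub>R axis k 1))"
  have "((\<lambda>s. x + s *\<^sub>R axis k 1) has_derivative (\<lambda>h. h *\<^sub>R axis k 1)) (at s)"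
    by (auto intro!: derivative_eq_intros)
  from has_derivative_compose[OF this differentiable_has_frechet_derivative[OF assms]]
  have "((\<lambda>s. g (x + s *\<^sub>R axis k 1)) has_derivative (\<lambda>h. ?D (h *\<^sub>R axis k 1))) (at s)" .
  moreover have "linear ?D"
    using differentiable_has_frechet_derivative[OF assms] has_derivative_linear by blast
  ultimately show ?thesis
    by (auto simp: pd_def linear_cmul mult.commute intro: has_derivative_imp_has_field_derivative)
qed

lemma difference_quotient_tendsto_pd:
  fixes g :: "real^'n::finite \<Rightarrow> real"
  assumes "g differentiable (at x)"
  shows "(\<lambda>n. (g (x + inverse (real (Suc n)) *\<^sub>R axis k 1) - g x) / inverse (real (Suc n)))
    \<longlonglongrightarrow> pd k g x"
proof -
  have "((\<lambda>s. g (x + s *\<^sub>R axis k 1)) has_real_derivative pd k g x) (at 0)"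
    using has_real_derivative_along_axis[of g x 0 k] assms by simp
  then have "((\<lambda>s. (g (x + s *\<^sub>R axis k 1) - g x) / s) \<longlongrightarrow> pd k g x) (at 0)"
    by (simp add: has_field_derivative_iff)
  moreover have "filterlim (\<lambda>n. inverse (real (Suc n))) (at 0) sequentially"
    using LIMSEQ_inverse_real_of_nat by (auto simp: filterlim_at intro!: always_eventually)
  ultimately show ?thesis
    by (rule filterlim_compose)
qed

lemma difference_quotient_dominated:
  fixes g :: "real^'n::finite \<Rightarrow> real"
  assumes "\<forall>x. g differentiable (at x)" and "\<forall>y. \<bar>pd k g y\<bar> \<le> M"
    and "vanishes_outside R g" and "0 < t" and "t \<le> 1"
  shows "\<bar>(g (x + t *\<^sub>R axis k 1) - g x) / t\<bar> \<le> M * indicator (cball 0 (R + 1)) x"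
proof (cases "x \<in> cball 0 (R + 1)")
  case True
  have "((\<lambda>s. g (x + s *\<^sub>R axis k 1)) has_real_derivative pd k g (x + s *\<^sub>R axis k 1)) (at s)" for s
    using has_real_derivative_along_axis assms(1) by blast
  then obtain z where "g (x + t *\<^sub>R axis k 1) - g (x + 0 *\<^sub>R axis k 1) = (t - 0) * pd k g (x + z *\<^sub>R axis k 1)"
    using MVT2[OF \<open>0 < t\<close>, of "\<lambda>s. g (x + s *\<^sub>R axis k 1)" "\<lambda>s. pd k g (x + s *\<^sub>R axis k 1)"]
    by blast
  then show ?thesis
    using True assms(2,4) by simp
next
  case False
  then have "R < norm x - t"
    using assms(5) by simp
  also have "norm x - t \<le> norm (x + t *\<^sub>R axis k 1)"
    using norm_triangle_ineq4[of "x + t *\<^sub>R axis k 1" "t *\<^sub>R axis k 1"] assms(4) by simp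
  finally show ?thesis
    using False assms(3,4) by (auto simp: vanishes_outside_def)
qed

lemma
  fixes g :: "real^'n::finite \<Rightarrow> real"
  assumes "C1 g" and "vanishes_outside R g"
  shows integrable_pd_vanishes_outside: "integrable lborel (pd k g)"
    and integral_pd_vanishes_outside: "integral\<^sup>L lborel (pd k g) = 0"
proof -
  have g_diff: "\<forall>x. g differentiable (at x)" and g_cont: "continuous_on UNIV g"
    and pd_cont: "continuous_on UNIV (pd k g)"
    using assms(1) C1_continuous by (auto simp: C1_def)
  have pd_vanishes: "vanishes_outside R (pd k g)"
    using assms(2) by (rule pd_vanishes_outside)
  show "integrable lborel (pd k g)"
    using pd_cont pd_vanishes by (rule integrable_continuous_vanishes_outside)
  define t :: "nat \<Rightarrow> real" where "t n = inverse (real (Suc n))" for n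
  define F where "F n x = (g (x + t n *\<^sub>R axis k 1) - g x) / t n" for n x
  obtain M where "\<forall>y. \<bar>pd k g y\<bar> \<le> M"
    using continuous_vanishes_outside_bounded[OF pd_cont pd_vanishes] by blast
  then have F_bound: "\<bar>F n x\<bar> \<le> M * indicator (cball 0 (R + 1)) x" for n x
    unfolding F_def t_def
    by (rule difference_quotient_dominated[OF g_diff _ assms(2)]) (simp_all add: field_simps)
  have F_lim: "(\<lambda>n. F n x) \<longlonglongrightarrow> pd k g x" for x
    unfolding F_def t_def by (rule difference_quotient_tendsto_pd) (use g_diff in blast)
  have "g \<in> borel_measurable borel"
    using g_cont by (rule borel_measurable_continuous_onI)
  then have F_meas: "F n \<in> borel_measurable lborel" for n
    unfolding F_def by measurable
  have pd_meas: "pd k g \<in> borel_measurable lborel"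
    using pd_cont by (simp add: borel_measurable_continuous_onI)
  have "integrable lborel (\<lambda>x::real^'n. M * indicator (cball 0 (R + 1)) x)"
    by (intro integrable_mult_right integrable_real_indicator emeasure_bounded_finite) auto
  then have "(\<lambda>n. integral\<^sup>L lborel (F n)) \<longlonglongrightarrow> integral\<^sup>L lborel (pd k g)"
    by (rule integral_dominated_convergence[OF pd_meas F_meas]) (auto intro!: AE_I2 simp: F_lim F_bound)
  moreover have "integral\<^sup>L lborel (F n) = 0" for n
    unfolding F_def[abs_def] by (rule integral_difference_eq_0[OF g_cont assms(2)])
  ultimately show "integral\<^sup>L lborel (pd k g) = 0"
    by (simp add: LIMSEQ_const_iff)
qed

lemma
  assumes "C1_field V" and "vanishes_outside R V"
  shows integrable_divergence: "integrable lborel (divergence V)"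
    and integral_divergence: "integral\<^sup>L lborel (divergence V) = 0"
proof -
  have "C1 (\<lambda>y. V y $ i)" and "vanishes_outside R (\<lambda>y. V y $ i)" for i
    using assms by (auto simp: C1_field_def vanishes_outside_def)
  then have "integrable lborel (pd i (\<lambda>y. V y $ i))"
    and "integral\<^sup>L lborel (pd i (\<lambda>y. V y $ i)) = 0" for i
    by (auto intro: integrable_pd_vanishes_outside integral_pd_vanishes_outside)
  then show "integrable lborel (divergence V)" and "integral\<^sup>L lborel (divergence V) = 0"
    unfolding divergence_def[abs_def] by (simp_all add: integral_sum)
qed

lemma
  assumes "integrable lborel g" and "C1_field V" and "vanishes_outside R V"
  shows integrable_add_divergence: "integrable lborel (\<lambda>x. g x + c * divergence V x)"
    and integral_add_divergence: "integral\<^sup>L lborel (\<lambda>x. g x + c * divergence V x) = integral\<^sup>L lborel g"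
  using assms integrable_divergence[OF assms(2,3)] integral_divergence[OF assms(2,3)] by simp_all

section \<open>Test functions\<close>

lemma test_fun_C1:
  assumes "test_fun f" shows "C1 f" and "C1 (pd i f)"
  using assms by (simp_all add: test_fun_def smooth_imp_C1 smooth_pd)

lemma test_fun_vanishes_outside:
  assumes "test_fun f" obtains R where "vanishes_outside R f"
proof -
  have "bounded {x. f x \<noteq> 0}"
    using assms compact_imp_bounded bounded_subset closure_subset unfolding test_fun_def by metis
  then obtain R where "\<And>x. f x \<noteq> 0 \<Longrightarrow> norm x \<le> R"
    unfolding bounded_iff by blast
  then have "vanishes_outside R f"
    unfolding vanishes_outside_def by (meson not_le)
  then show ?thesis by (rule that)
qed

lemma
  assumes "C1_field V" and "test_fun f"
  shows integrable_inner_grad: "integrable lborel (\<lambda>x. V x \<bullet> grad f x)"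
    and integral_inner_grad:
      "integral\<^sup>L lborel (\<lambda>x. V x \<bullet> grad f x) = - integral\<^sup>L lborel (\<lambda>x. f x * divergence V x)"
proof -
  obtain R where R: "vanishes_outside R f"
    using assms(2) by (rule test_fun_vanishes_outside)
  have f: "C1 f"
    using assms(2) by (rule test_fun_C1)
  have eq: "(\<lambda>x. V x \<bullet> grad f x)
      = (\<lambda>x. - (f x * divergence V x) + 1 * divergence (\<lambda>y. f y *\<^sub>R V y) x)"
    using f assms(1) by (simp add: fun_eq_iff C1_def C1_field_def divergence_scaleR inner_commute)
  have int: "integrable lborel (\<lambda>x. - (f x * divergence V x))"
    using C1_continuous[OF f] continuous_on_divergence[OF assms(1)] R
    by (intro integrable_continuous_vanishes_outside[where R=R] continuous_intros)
       (auto simp: vanishes_outside_def)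
  have C1: "C1_field (\<lambda>y. f y *\<^sub>R V y)" and R': "vanishes_outside R (\<lambda>y. f y *\<^sub>R V y)"
    using C1_field_scaleR[OF f assms(1)] R by (auto simp: vanishes_outside_def)
  show "integrable lborel (\<lambda>x. V x \<bullet> grad f x)"
    unfolding eq by (rule integrable_add_divergence[OF int C1 R'])
  show "integral\<^sup>L lborel (\<lambda>x. V x \<bullet> grad f x) = - integral\<^sup>L lborel (\<lambda>x. f x * divergence V x)"
    unfolding eq integral_add_divergence[OF int C1 R'] by simp
qed

definition bump :: "real^'n::finite \<Rightarrow> real \<Rightarrow> real^'n \<Rightarrow> real" where
  "bump c r x = psi 0 (r\<^sup>2 - (norm (x - c))\<^sup>2)"

lemma bump_nonneg: "0 \<le> bump c r x"
  by (simp add: bump_def psi_def)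

lemma bump_center_pos: "0 < r \<Longrightarrow> 0 < bump c r c"
  by (simp add: bump_def psi_def)

lemma bump_eq_0: "\<bar>r\<bar> \<le> norm (x - c) \<Longrightarrow> bump c r x = 0"
  using power_mono[of "\<bar>r\<bar>" "norm (x - c)" 2] by (simp add: bump_def psi_def)

lemma test_fun_bump: "test_fun (bump c r)"
proof -
  have "bump c r = (\<lambda>x. psi 0 (r\<^sup>2 - (x - c) \<bullet> (x - c)))"
    by (simp add: bump_def fun_eq_iff power2_norm_eq_inner)
  moreover have "elementary_smooth (\<lambda>x. (x - c) $ j)" for j
    using elementary_smooth_diff[OF elementary_smooth.coord elementary_smooth.const] by simp
  then have "elementary_smooth (\<lambda>x. r\<^sup>2 - (x - c) \<bullet> (x - c))"
    by (simp add: elementary_smooth_diff elementary_smooth_inner elementary_smooth.const)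
  then have "elementary_smooth (\<lambda>x. psi 0 (r\<^sup>2 - (x - c) \<bullet> (x - c)))"
    by (rule elementary_smooth.comp[of psi, OF psi_has_real_derivative])
  ultimately have "smooth (bump c r)"
    by (simp add: elementary_smooth_imp_smooth)
  moreover have "{x. bump c r x \<noteq> 0} \<subseteq> cball c \<bar>r\<bar>"
  proof
    fix x assume "x \<in> {x. bump c r x \<noteq> 0}"
    then have "\<not> \<bar>r\<bar> \<le> norm (x - c)"
      using bump_eq_0[of r x c] by auto
    then show "x \<in> cball c \<bar>r\<bar>"
      by (simp add: dist_norm norm_minus_commute)
  qed
  then have "bounded {x. bump c r x \<noteq> 0}"
    using bounded_cball bounded_subset by blast
  ultimately show ?thesis
    by (simp add: test_fun_def compact_closure)
qed

lemma continuous_AE_eq_0: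
  fixes q :: "'a::euclidean_space \<Rightarrow> real"
  assumes "continuous_on UNIV q" and "AE x in lborel. q x = 0"
  shows "q x = 0"
proof (rule ccontr)
  assume "q x \<noteq> 0"
  then have "x \<in> {y. q y \<noteq> 0}" by simp
  moreover have "open {y. q y \<noteq> 0}"
    using open_Collect_neq[OF assms(1) continuous_on_const] .
  ultimately obtain r where "0 < r" and r: "ball x r \<subseteq> {y. q y \<noteq> 0}"
    using open_contains_ball by blast
  obtain N where "{y \<in> space lborel. q y \<noteq> 0} \<subseteq> N" and "emeasure lborel N = 0"
    and "N \<in> sets lborel"
    using assms(2) by (elim AE_E) auto
  then have "emeasure lborel (ball x r) = 0"
    using r emeasure_mono[of "ball x r" N lborel] by auto
  then show False
    using content_ball_gt_0_iff[of x r] \<open>0 < r\<close> by (simp add: measure_def)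
qed

lemma continuous_nonneg_integral_eq_0:
  fixes p :: "'a::euclidean_space \<Rightarrow> real"
  assumes "continuous_on UNIV p" and "\<And>y. 0 \<le> p y" and "vanishes_outside R p"
    and "integral\<^sup>L lborel p = 0"
  shows "p x = 0"
proof -
  have "integrable lborel p"
    using assms(1,3) by (rule integrable_continuous_vanishes_outside)
  then have "AE y in lborel. p y = 0"
    using integral_nonneg_eq_0_iff_AE[of lborel p] assms(2,4) by simp
  then show ?thesis
    by (rule continuous_AE_eq_0[OF assms(1)])
qed

theorem fundamental_lemma_calculus_of_variations:
  fixes q :: "real^'n::finite \<Rightarrow> real"
  assumes cont: "continuous_on UNIV q"
    and orth: "\<And>f. test_fun f \<Longrightarrow> integral\<^sup>L lborel (\<lambda>x. f x * q x) = 0"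
  shows "q x = 0"
proof (rule ccontr)
  assume "q x \<noteq> 0"
  have "open {y. 0 < q y * q x}"
    by (intro open_Collect_less continuous_intros cont)
  moreover have "x \<in> {y. 0 < q y * q x}"
    using \<open>q x \<noteq> 0\<close> by (metis mem_Collect_eq not_real_square_gt_zero)
  ultimately obtain r where "0 < r" and "ball x r \<subseteq> {y. 0 < q y * q x}"
    using open_contains_ball by blast
  then have r: "0 < q y * q x" if "dist x y < r" for y
    using that by auto
  define p where "p y = bump x r y * (q y * q x)" for y
  have p_cont: "continuous_on UNIV p"
    unfolding p_def using test_fun_C1(1)[OF test_fun_bump, THEN C1_continuous]
    by (intro continuous_intros cont) auto
  have p_nonneg: "0 \<le> p y" for y
    using r[of y] bump_eq_0[of r y x] bump_nonneg[of x r y] \<open>0 < r\<close>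
    by (cases "dist x y < r") (auto simp: p_def dist_norm norm_minus_commute)
  have "vanishes_outside (norm x + r) p"
    unfolding vanishes_outside_def
  proof (intro allI impI)
    fix y :: "real^'n" assume "norm x + r < norm y"
    then have "\<bar>r\<bar> \<le> norm (y - x)"
      using norm_triangle_ineq2[of y x] \<open>0 < r\<close> by linarith
    then show "p y = 0" by (simp add: p_def bump_eq_0)
  qed
  moreover have "integral\<^sup>L lborel p = integral\<^sup>L lborel (\<lambda>y. bump x r y * q y) * q x"
    unfolding p_def[abs_def] mult.assoc[symmetric] by (rule integral_mult_left_zero)
  then have "integral\<^sup>L lborel p = 0"
    using orth[OF test_fun_bump] by simp
  ultimately have "p x = 0"
    using continuous_nonneg_integral_eq_0[OF p_cont p_nonneg] by blast
  then show False
    using bump_center_pos[OF \<open>0 < r\<close>, of x] r[of x] \<open>0 < r\<close> by (simp add: p_def)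
qed

lemma test_fun_orthogonal_iff:
  fixes q :: "real^'n::finite \<Rightarrow> real"
  assumes "continuous_on UNIV q"
  shows "(\<forall>f. test_fun f \<longrightarrow> integral\<^sup>L lborel (\<lambda>x. f x * q x) = 0) \<longleftrightarrow> (\<forall>x. q x = 0)"
  using fundamental_lemma_calculus_of_variations[OF assms] by auto

section \<open>Matrix identities\<close>

lemma inner_matrix_vector_mult_symmetric:
  fixes S M :: "real^'n::finite^'n"
  assumes "transpose S = S"
  shows "(S *v x) \<bullet> (M *v x) = x \<bullet> ((S ** M) *v x)"
  by (metis assms dot_lmul_matrix matrix_vector_mul_assoc transpose_matrix_vector)

lemma inner_transpose_matrix_vector_mult: "u \<bullet> (transpose A *v v) = (A *v u) \<bullet> (v :: real^'n::finite)"
  by (metis dot_lmul_matrix inner_commute transpose_matrix_vector)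

lemma quadratic_form_eq_0_iff:
  fixes M :: "real^'n::finite^'n"
  shows "(\<forall>x. x \<bullet> (M *v x) = 0) \<longleftrightarrow> M + transpose M = 0"
proof
  assume Q: "\<forall>x. x \<bullet> (M *v x) = 0"
  have entry: "axis a 1 \<bullet> (M *v axis b 1) = M $ a $ b" for a b
    by (simp add: matrix_vector_mult_basis inner_axis' column_def)
  have "M $ a $ b + M $ b $ a = 0" for a b
    using Q[rule_format, of "axis a 1 + axis b 1"] Q[rule_format, of "axis a 1"] Q[rule_format, of "axis b 1"]
    by (simp add: matrix_vector_right_distrib inner_add_left inner_add_right entry)
  then show "M + transpose M = 0"
    by (simp add: vec_eq_iff transpose_def)
next
  assume "M + transpose M = 0"
  then have "x \<bullet> ((M + transpose M) *v x) = 0" for x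
    by simp
  moreover have "x \<bullet> (transpose M *v x) = x \<bullet> (M *v x)" for x
    using inner_transpose_matrix_vector_mult[of x M x] by (simp add: inner_commute)
  ultimately show "\<forall>x. x \<bullet> (M *v x) = 0"
    by (simp add: matrix_vector_mult_add_rdistrib inner_add_right)
qed

lemma symmetric_inner_eq_0_iff:
  fixes S H :: "real^'n::finite^'n"
  assumes "transpose S = S"
  shows "(\<forall>x. (S *v x) \<bullet> (H *v x) = 0) \<longleftrightarrow> S ** H + transpose (S ** H) = 0"
  unfolding inner_matrix_vector_mult_symmetric[OF assms] by (rule quadratic_form_eq_0_iff)

lemma divergence_weight_eq_0_iff:
  "(\<forall>x. trace H + 2 * ((S *v x) \<bullet> (H *v x)) = 0) \<longleftrightarrow> trace H = 0 \<and> (\<forall>x. (S *v x) \<bullet> (H *v x) = 0)"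
proof
  assume weight: "\<forall>x. trace H + 2 * ((S *v x) \<bullet> (H *v x)) = 0"
  then have "trace H = 0"
    using weight[rule_format, of 0] by simp
  with weight show "trace H = 0 \<and> (\<forall>x. (S *v x) \<bullet> (H *v x) = 0)"
    by simp
qed simp

lemma transpose_diff: "transpose (X - Y) = transpose X - transpose (Y :: 'a::ab_group_add^'n^'m)"
  by (simp add: transpose_def vec_eq_iff)

lemma matrix_diff_ldistrib: "X ** (Y - Z) = X ** Y - X ** (Z :: 'a::ring_1^'n^'m)"
  by (simp add: matrix_matrix_mult_def vec_eq_iff sum_subtractf algebra_simps)

lemma matrix_diff_rdistrib: "(Y - Z) ** X = Y ** X - Z ** (X :: 'a::ring_1^'n^'m)"
  by (simp add: matrix_matrix_mult_def vec_eq_iff sum_subtractf algebra_simps)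

lemma symmetrized_product_eq_0_iff:
  fixes A G S :: "real^'n::finite^'n"
  assumes "transpose A = A" and "transpose S = S"
  shows "S ** (G - A ** S) + transpose (S ** (G - A ** S)) = 0 \<longleftrightarrow>
    S ** G + transpose G ** S = 2 *\<^sub>R (S ** A ** S)"
proof -
  have "S ** (G - A ** S) + transpose (S ** (G - A ** S))
      = (S ** G + transpose G ** S) - (S ** A ** S + S ** A ** S)"
    using assms by (simp add: matrix_transpose_mul transpose_diff matrix_diff_ldistrib
        matrix_diff_rdistrib matrix_mul_assoc)
  then show ?thesis
    by (simp add: scaleR_2)
qed

lemma matrix_eq_0_iff: "M = 0 \<longleftrightarrow> (\<forall>j k. M $ j $ k = 0)"
  by (simp add: vec_eq_iff)

lemma symmetrized_product_eq_0_iff_entries: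
  fixes S H :: "real^'n::finite^'n"
  assumes "transpose S = S"
  shows "S ** H + transpose (S ** H) = 0 \<longleftrightarrow>
    (\<forall>j. (\<Sum>i\<in>UNIV. S$i$j * H$i$j) = 0) \<and>
    (\<forall>j k. j \<noteq> k \<longrightarrow> (\<Sum>i\<in>UNIV. S$i$j * H$i$k + S$i$k * H$i$j) = 0)"
proof -
  have sym: "S $ j $ i = S $ i $ j" for i j
    using arg_cong[OF assms, of "\<lambda>M. M $ i $ j"] by (simp add: transpose_def)
  have entry: "(S ** H + transpose (S ** H)) $ j $ k = (\<Sum>i\<in>UNIV. S$i$j * H$i$k + S$i$k * H$i$j)" for j k
    by (simp add: matrix_matrix_mult_def transpose_def sum.distrib sym)
  have diag: "(\<Sum>i\<in>UNIV. S$i$j * H$i$j + S$i$j * H$i$j) = 2 * (\<Sum>i\<in>UNIV. S$i$j * H$i$j)" for j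
    by (simp only: sum.distrib mult_2)
  have split: "(\<forall>j k. E j k = 0) \<longleftrightarrow> (\<forall>j. E j j = 0) \<and> (\<forall>j k. j \<noteq> k \<longrightarrow> E j k = 0)"
    for E :: "'n \<Rightarrow> 'n \<Rightarrow> real"
  proof
    assume "(\<forall>j. E j j = 0) \<and> (\<forall>j k. j \<noteq> k \<longrightarrow> E j k = 0)"
    then show "\<forall>j k. E j k = 0"
      by (metis (full_types))
  qed simp
  show ?thesis
    unfolding matrix_eq_0_iff entry split[of "\<lambda>j k. \<Sum>i\<in>UNIV. S$i$j * H$i$k + S$i$k * H$i$j"] diag
    by simp
qed

section \<open>The Gaussian weight\<close>

definition gaussian :: "real^'n::finite^'n \<Rightarrow> real^'n \<Rightarrow> real" where
  "gaussian S x = exp (x \<bullet> (S *v x))"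

lemma elementary_smooth_gaussian: "elementary_smooth (gaussian S)"
  unfolding gaussian_def[abs_def]
  using elementary_smooth_exp[OF elementary_smooth_quadratic_form[of 1 S]] by simp

lemma gaussian_pos: "0 < gaussian S x"
  by (simp add: gaussian_def)

lemma grad_quadratic_form:
  fixes S :: "real^'n::finite^'n"
  assumes "transpose S = S"
  shows "grad (\<lambda>x. c * (x \<bullet> (S *v x))) x = (2 * c) *\<^sub>R (S *v x)"
proof -
  have "((\<lambda>x. c * (x \<bullet> (S *v x))) has_derivative (\<lambda>h. c * (x \<bullet> (S *v h) + h \<bullet> (S *v x)))) (at x)"
    by (auto intro!: derivative_eq_intros bounded_linear.has_derivative[OF matrix_vector_mul_bounded_linear])
  moreover have "x \<bullet> (S *v h) = (S *v x) \<bullet> h" for h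
    using assms dot_lmul_matrix[of x S h] transpose_matrix_vector[of S x] by simp
  ultimately show ?thesis
    by (simp add: grad_def vec_eq_iff has_derivative_imp_pd inner_axis inner_axis')
qed

lemma grad_gaussian:
  fixes S :: "real^'n::finite^'n"
  assumes "transpose S = S"
  shows "grad (gaussian S) x = (2 * gaussian S x) *\<^sub>R (S *v x)"
proof -
  have "elementary_smooth (\<lambda>x. x \<bullet> (S *v x))"
    using elementary_smooth_quadratic_form[of 1 S] by simp
  then have "pd k (gaussian S) x = gaussian S x * pd k (\<lambda>x. x \<bullet> (S *v x)) x" for k
    unfolding gaussian_def[abs_def] by (intro pd_comp DERIV_exp elementary_smooth_differentiable)
  then show ?thesis
    using grad_quadratic_form[OF assms, of 1 x] by (simp add: grad_def vec_eq_iff)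
qed

lemma C1_field_gaussian_linear: "C1_field (\<lambda>y. gaussian S y *\<^sub>R (H *v y))"
  by (intro C1_field_scaleR elementary_smooth_imp_C1 elementary_smooth_gaussian C1_field_linear)

lemma divergence_gaussian_linear:
  fixes H S :: "real^'n::finite^'n"
  assumes "transpose S = S"
  shows "divergence (\<lambda>y. gaussian S y *\<^sub>R (H *v y)) x
    = gaussian S x * (trace H + 2 * ((S *v x) \<bullet> (H *v x)))"
  using assms
  by (simp add: divergence_scaleR elementary_smooth_differentiable elementary_smooth_gaussian
      elementary_smooth_matrix_vector_mult divergence_matrix_vector_mult grad_gaussian algebra_simps)

lemma test_fun_orthogonal_divergence_gaussian_iff:
  fixes H S :: "real^'n::finite^'n"
  assumes "transpose S = S"
  shows "(\<forall>f. test_fun f \<longrightarrow>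
      integral\<^sup>L lborel (\<lambda>x. f x * divergence (\<lambda>y. gaussian S y *\<^sub>R (H *v y)) x) = 0)
    \<longleftrightarrow> (\<forall>x. trace H + 2 * ((S *v x) \<bullet> (H *v x)) = 0)"
proof -
  have "gaussian S x \<noteq> 0" for x
    using gaussian_pos[of S x] by simp
  then show ?thesis
    unfolding test_fun_orthogonal_iff[OF continuous_on_divergence[OF C1_field_gaussian_linear]]
    by (simp add: divergence_gaussian_linear[OF assms])
qed

lemma gaussian_LAG_eq:
  fixes A G S :: "real^'n::finite^'n"
  assumes "transpose S = S" and "smooth f"
  shows "gaussian S x * LAG A G f x =
    (gaussian S x *\<^sub>R ((G - A ** S) *v x)) \<bullet> grad f x
    + 1/2 * divergence (\<lambda>y. gaussian S y *\<^sub>R (transpose A *v grad f y)) x"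
proof -
  have pd_diff: "pd i f differentiable (at x)" for i
    using assms(2) iter_pd.simps(2)[of i "[]" f] unfolding smooth_def by (metis iter_pd.simps(1))
  then have "(\<lambda>y. (transpose A *v grad f y) $ i) differentiable (at x)" for i
    by (auto simp: matrix_vector_mult_def grad_def intro!: derivative_intros simp del: transpose_matrix_vector)
  then have "divergence (\<lambda>y. gaussian S y *\<^sub>R (transpose A *v grad f y)) x
      = gaussian S x * trace (A ** hess f x) + 2 * gaussian S x * (((A ** S) *v x) \<bullet> grad f x)"
    using assms(1) pd_diff
    by (simp add: divergence_scaleR elementary_smooth_differentiable elementary_smooth_gaussian
        divergence_transpose_mult_grad grad_gaussian inner_transpose_matrix_vector_mult
        matrix_vector_mult_scaleR matrix_vector_mul_assoc del: transpose_matrix_vector)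
  then show ?thesis
    by (simp add: LAG_def algebra_simps)
qed

lemma continuous_on_LAG:
  assumes "test_fun f"
  shows "continuous_on UNIV (LAG A G f)"
proof -
  have "LAG A G f = (\<lambda>x. 1/2 * (\<Sum>i\<in>UNIV. \<Sum>k\<in>UNIV. A $ i $ k * pd k (pd i f) x) + (G *v x) \<bullet> grad f x)"
    by (simp add: fun_eq_iff LAG_def trace_def matrix_matrix_mult_def hess_def)
  moreover have "continuous_on UNIV (pd k (pd i f))" and "continuous_on UNIV (pd i f)" for i k
    using test_fun_C1[OF assms] by (simp_all add: C1_def)
  moreover have "continuous_on UNIV (\<lambda>x. G *v x)"
    by (rule linear_continuous_on[OF matrix_vector_mul_bounded_linear])
  ultimately show ?thesis
    by (simp only:) (intro continuous_intros continuous_on_grad)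
qed

lemma
  fixes A G S :: "real^'n::finite^'n"
  assumes S: "transpose S = S" and f: "test_fun f"
  shows integrable_gaussian_LAG: "integrable lborel (\<lambda>x. gaussian S x * LAG A G f x)"
    and integral_gaussian_LAG: "integral\<^sup>L lborel (\<lambda>x. gaussian S x * LAG A G f x)
      = - integral\<^sup>L lborel (\<lambda>x. f x * divergence (\<lambda>y. gaussian S y *\<^sub>R ((G - A ** S) *v y)) x)"
proof -
  let ?V = "\<lambda>y. gaussian S y *\<^sub>R ((G - A ** S) *v y)"
  let ?W = "\<lambda>y. gaussian S y *\<^sub>R (transpose A *v grad f y)"
  obtain R where "vanishes_outside R f"
    using f by (rule test_fun_vanishes_outside)
  then have "vanishes_outside R (grad f)"
    by (rule grad_vanishes_outside)
  then have W_vanishes: "vanishes_outside R ?W"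
    unfolding vanishes_outside_def by (simp del: transpose_matrix_vector)
  have "C1_field (grad f)"
    using f by (intro C1_field_grad test_fun_C1)
  then have W_C1: "C1_field ?W"
    by (intro C1_field_scaleR elementary_smooth_imp_C1 elementary_smooth_gaussian
        C1_field_matrix_vector_mult)
  have eq: "(\<lambda>x. gaussian S x * LAG A G f x) = (\<lambda>x. ?V x \<bullet> grad f x + 1/2 * divergence ?W x)"
    using gaussian_LAG_eq[OF S] f unfolding test_fun_def by blast
  note V_int = integrable_inner_grad[OF C1_field_gaussian_linear f]
  show "integrable lborel (\<lambda>x. gaussian S x * LAG A G f x)"
    unfolding eq by (rule integrable_add_divergence[OF V_int W_C1 W_vanishes])
  show "integral\<^sup>L lborel (\<lambda>x. gaussian S x * LAG A G f x)
      = - integral\<^sup>L lborel (\<lambda>x. f x * divergence ?V x)"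
    unfolding eq integral_add_divergence[OF V_int W_C1 W_vanishes]
    by (rule integral_inner_grad[OF C1_field_gaussian_linear f])
qed

section \<open>Invariance and Helmholtz-Hodge decompositions\<close>

lemma inf_invariant_gaussian_iff:
  fixes A G S :: "real^'n::finite^'n"
  assumes S: "transpose S = S"
  shows "inf_invariant (density lborel (\<lambda>x. ennreal (gaussian S x))) (LAG A G) \<longleftrightarrow>
    (\<forall>x. trace (G - A ** S) + 2 * ((S *v x) \<bullet> ((G - A ** S) *v x)) = 0)"
proof -
  let ?V = "\<lambda>y. gaussian S y *\<^sub>R ((G - A ** S) *v y)"
  have meas: "gaussian S \<in> borel_measurable lborel" "LAG A G f \<in> borel_measurable lborel"
    if "test_fun f" for f
    using continuous_on_LAG[OF that]
      C1_continuous[OF elementary_smooth_imp_C1[OF elementary_smooth_gaussian]]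
    by (auto intro!: borel_measurable_continuous_onI)
  have nonneg: "AE x in lborel. 0 \<le> gaussian S x"
    by (simp add: gaussian_pos less_imp_le)
  have "integrable (density lborel (\<lambda>x. ennreal (gaussian S x))) (LAG A G f) \<and>
      integral\<^sup>L (density lborel (\<lambda>x. ennreal (gaussian S x))) (LAG A G f)
        = - integral\<^sup>L lborel (\<lambda>x. f x * divergence ?V x)" if f: "test_fun f" for f
    using integrable_density[OF meas(2,1)[OF f] nonneg] integral_density[OF meas(2,1)[OF f] nonneg]
      integrable_gaussian_LAG[OF S f] integral_gaussian_LAG[OF S f]
    by simp
  then have "inf_invariant (density lborel (\<lambda>x. ennreal (gaussian S x))) (LAG A G) \<longleftrightarrow>
      (\<forall>f. test_fun f \<longrightarrow> integral\<^sup>L lborel (\<lambda>x. f x * divergence ?V x) = 0)"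
    unfolding inf_invariant_def by auto
  also have "\<dots> \<longleftrightarrow> (\<forall>x. trace (G - A ** S) + 2 * ((S *v x) \<bullet> ((G - A ** S) *v x)) = 0)"
    by (rule test_fun_orthogonal_divergence_gaussian_iff[OF S])
  finally show ?thesis .
qed

lemma WHHD_gaussian_iff:
  fixes H S :: "real^'n::finite^'n"
  assumes S: "transpose S = S"
  shows "WHHD (\<lambda>x. S *v x + H *v x) (\<lambda>x. 1/2 * (x \<bullet> (S *v x))) (\<lambda>x. H *v x) \<longleftrightarrow>
    (\<forall>x. trace H + 2 * ((S *v x) \<bullet> (H *v x)) = 0)"
proof -
  let ?V = "\<lambda>y. gaussian S y *\<^sub>R (H *v y)"
  have "(\<lambda>x. ((H *v x) \<bullet> grad f x) * exp (2 * (1/2 * (x \<bullet> (S *v x))))) = (\<lambda>x. ?V x \<bullet> grad f x)" for f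
    by (simp add: fun_eq_iff gaussian_def)
  then have integral_iff: "integral\<^sup>L lborel (\<lambda>x. ((H *v x) \<bullet> grad f x) * exp (2 * (1/2 * (x \<bullet> (S *v x))))) = 0
      \<longleftrightarrow> integral\<^sup>L lborel (\<lambda>x. f x * divergence ?V x) = 0" if "test_fun f" for f
    using integral_inner_grad[OF C1_field_gaussian_linear that] by simp
  have "\<forall>x. (\<lambda>x. 1/2 * (x \<bullet> (S *v x))) differentiable (at x)"
    using elementary_smooth_differentiable[OF elementary_smooth_quadratic_form] by blast
  moreover have "\<forall>x. S *v x + H *v x = grad (\<lambda>x. 1/2 * (x \<bullet> (S *v x))) x + H *v x"
    using grad_quadratic_form[OF S, of "1/2"] by simp
  ultimately have "WHHD (\<lambda>x. S *v x + H *v x) (\<lambda>x. 1/2 * (x \<bullet> (S *v x))) (\<lambda>x. H *v x) \<longleftrightarrow>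
      (\<forall>f. test_fun f \<longrightarrow> integral\<^sup>L lborel (\<lambda>x. f x * divergence ?V x) = 0)"
    unfolding WHHD_def using integral_iff by blast
  also have "\<dots> \<longleftrightarrow> (\<forall>x. trace H + 2 * ((S *v x) \<bullet> (H *v x)) = 0)"
    by (rule test_fun_orthogonal_divergence_gaussian_iff[OF S])
  finally show ?thesis .
qed

lemma SOHHD_gaussian_iff:
  fixes H S :: "real^'n::finite^'n"
  assumes S: "transpose S = S"
  shows "SOHHD (\<lambda>x. S *v x + H *v x) (\<lambda>x. 1/2 * (x \<bullet> (S *v x))) (\<lambda>x. H *v x) \<longleftrightarrow>
    trace H = 0 \<and> (\<forall>x. (S *v x) \<bullet> (H *v x) = 0)"
proof -
  have lin: "continuous_on UNIV (\<lambda>x. M *v x)" for M :: "real^'n^'n"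
    by (rule linear_continuous_on[OF matrix_vector_mul_bounded_linear])
  have "integral\<^sup>L lborel (\<lambda>x. (H *v x) \<bullet> grad f x) = 0 \<longleftrightarrow> integral\<^sup>L lborel (\<lambda>x::real^'n. f x * trace H) = 0"
    if "test_fun f" for f
    using integral_inner_grad[OF C1_field_linear that] unfolding divergence_matrix_vector_mult by simp
  then have "(\<forall>f. test_fun f \<longrightarrow> integral\<^sup>L lborel (\<lambda>x. (H *v x) \<bullet> grad f x) = 0) \<longleftrightarrow>
      (\<forall>f. test_fun f \<longrightarrow> integral\<^sup>L lborel (\<lambda>x::real^'n. f x * trace H) = 0)"
    by blast
  also have "\<dots> \<longleftrightarrow> trace H = 0"
    using test_fun_orthogonal_iff[of "\<lambda>_. trace H"] by simp
  finally have trace_iff: "(\<forall>f. test_fun f \<longrightarrow> integral\<^sup>L lborel (\<lambda>x. (H *v x) \<bullet> grad f x) = 0) \<longleftrightarrow>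
      trace H = 0" .
  have "continuous_on UNIV (\<lambda>x. (S *v x) \<bullet> (H *v x))"
    by (intro continuous_intros lin)
  then have AE_iff: "(AE x in lborel. (S *v x) \<bullet> (H *v x) = 0) \<longleftrightarrow> (\<forall>x. (S *v x) \<bullet> (H *v x) = 0)"
    using continuous_AE_eq_0 by auto
  show ?thesis
    unfolding SOHHD_def OHHD_def trace_iff
    using grad_quadratic_form[OF S, of "1/2"] elementary_smooth_quadratic_form[of "1/2" S] AE_iff
    by (auto simp: elementary_smooth_differentiable elementary_smooth_imp_C1 C1_field_linear
        intro!: continuous_intros lin)
qed

theorem lemma2p11:
  fixes A G S :: "real^('n::finite)^('n::finite)"
  assumes "CARD('n) \<ge> 2"
    and "transpose A = A"
    and "\<forall>x::real^'n. x \<noteq> 0 \<longrightarrow> x \<bullet> (A *v x) > 0"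
    and "transpose S = S"
  defines "Phi \<equiv> (\<lambda>x::real^'n. 1/2 * (x \<bullet> (S *v x)))"
    and "\<mu> \<equiv> density lborel (\<lambda>x::real^'n. ennreal (exp (x \<bullet> (S *v x))))"
    and "H \<equiv> G - A ** S"
    and "Gt \<equiv> (\<lambda>x::real^'n. S *v x + (G - A ** S) *v x)"
    and "B \<equiv> (\<lambda>x::real^'n. (G - A ** S) *v x)"
  shows "(inf_invariant \<mu> (LAG A G) \<longleftrightarrow>
            (S ** G + transpose G ** S = 2 *\<^sub>R (S ** A ** S) \<and> trace (G - A ** S) = 0))
       \<and> ((S ** G + transpose G ** S = 2 *\<^sub>R (S ** A ** S) \<and> trace (G - A ** S) = 0) \<longleftrightarrow>
            ((\<forall>j. (\<Sum>i\<in>UNIV. S$i$j * H$i$j) = 0)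
             \<and> (\<forall>j k. j \<noteq> k \<longrightarrow> (\<Sum>i\<in>UNIV. S$i$j * H$i$k + S$i$k * H$i$j) = 0)
             \<and> (\<Sum>i\<in>UNIV. H$i$i) = 0))
       \<and> (WHHD Gt Phi B \<longleftrightarrow> SOHHD Gt Phi B)
       \<and> (SOHHD Gt Phi B \<longleftrightarrow> inf_invariant \<mu> (LAG A G))"
proof -
  have A: "transpose A = A" and S: "transpose S = S"
    using assms(2,4) .
  let ?C = "S ** G + transpose G ** S = 2 *\<^sub>R (S ** A ** S) \<and> trace (G - A ** S) = 0"
  have cross_iff: "trace H = 0 \<and> (\<forall>x. (S *v x) \<bullet> (H *v x) = 0) \<longleftrightarrow> ?C"
    unfolding symmetric_inner_eq_0_iff[OF S] H_def symmetrized_product_eq_0_iff[OF A S] by blast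
  then have weight_iff: "(\<forall>x. trace H + 2 * ((S *v x) \<bullet> (H *v x)) = 0) \<longleftrightarrow> ?C"
    by (simp only: divergence_weight_eq_0_iff)
  have "inf_invariant \<mu> (LAG A G) \<longleftrightarrow> ?C"
    unfolding \<mu>_def gaussian_def[symmetric] inf_invariant_gaussian_iff[OF S] weight_iff[unfolded H_def] ..
  moreover have "?C \<longleftrightarrow> ((\<forall>j. (\<Sum>i\<in>UNIV. S$i$j * H$i$j) = 0)
      \<and> (\<forall>j k. j \<noteq> k \<longrightarrow> (\<Sum>i\<in>UNIV. S$i$j * H$i$k + S$i$k * H$i$j) = 0)
      \<and> (\<Sum>i\<in>UNIV. H$i$i) = 0)"
    using symmetrized_product_eq_0_iff[OF A S] symmetrized_product_eq_0_iff_entries[OF S, of H]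
    by (auto simp: H_def trace_def)
  moreover have "WHHD Gt Phi B \<longleftrightarrow> ?C" and "SOHHD Gt Phi B \<longleftrightarrow> ?C"
    unfolding Gt_def Phi_def B_def WHHD_gaussian_iff[OF S] SOHHD_gaussian_iff[OF S]
    using weight_iff cross_iff by (simp_all only: H_def)
  ultimately show ?thesis
    by blast
qed

end
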